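(* Let $b,\ell\ge1$, $s=2^b$ and $m=(s/2)^\ell=2^{(b-1)\ell}$. Let $\mathcal F_{b,\ell}$ be the family of all graphs obtained from $G_{b,\ell}$ by deleting an arbitrary subset of the level-$\ell$ vertices $\{v_{\ell,\vec j}:\vec j\in[0,s-1]^\ell\}$ together with their incident edges. Then any distance labeling scheme for $\mathcal F_{b,\ell}$ assigns, for some graph in $\mathcal F_{b,\ell}$, to some vertex a label of at least $\textsc{SumIndex}(m)-b\ell$ bits.
   Context: Notation $[a,b]=\{a,\dots,b\}$. Fix $b,\ell\ge1$, $s=2^b$, $A=3\ell s^2$. The weighted graph $H_{b,\ell}$ has vertex set $\bigcup_{i=0}^{2\ell}V_i$, $V_i=\{v_{i,\vec j}:\vec j\in[0,s-1]^\ell\}$; for $i\in[0,2\ell-1]$ let $c(i)=i+1$ if $i<\ell$, $c(i)=2\ell-i$ if $i\ge\ell$; $v_{i,\vec j}$ and $v_{i+1,\vec j'}$ are adjacent iff $j_k=j'_k$ for all $k\ne c(i)$, with weight $A+(j_{c(i)}-j'_{c(i)})^2$; no other edges. The unweighted graph $G_{b,\ell}$: each $v\in V_i$ is kept and gets attached (root adjacent to $v$) a complete binary tree $T^{\mathrm{in}}_v$ of depth $b$ (only if $i>0$) with leaves $v^{\mathrm{in}}_u$ for the neighbors $u\in V_{i-1}$, and a complete binary tree $T^{\mathrm{out}}_v$ of depth $b$ (only if $i<2\ell$) with leaves $v^{\mathrm{out}}_u$ for the neighbors $u\in V_{i+1}$; trees disjoint; for each edge $e=\{u,v\}$ of $H_{b,\ell}$,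 $u\in V_i,v\in V_{i+1}$, the leaves $u^{\mathrm{out}}_v$ and $v^{\mathrm{in}}_u$ are joined by a path of length $w(e)-2b-2$ through new vertices. A distance labeling scheme for a family $\mathcal F$ of graphs consists of a fixed decoding function $f$ and, for each $G\in\mathcal F$, an assignment of binary strings $\mathsf{label}(u)$ to vertices $u\in V(G)$, such that $f(\mathsf{label}(u),\mathsf{label}(v))=\mathrm{dist}_G(u,v)$ for all $u,v$. Sum-Index problem on $\mathbb Z_n$: a string $S=S_0\dots S_{n-1}\in\{0,1\}^n$ is known to both Alice and Bob; Alice also holds $a\in[0,n-1]$, Bob holds $b'\in[0,n-1]$; each simultaneously sends one message to a referee, who must output $S_{(a+b')\bmod n}$ from the two messages alone. $\textsc{SumIndex}(n)$ denotes the minimum, over deterministic such protocols, of the maximum (over inputs and both players) message length in bits. *)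

theory Defs
  imports Main "HOL-Library.Extended_Nat"
begin

definition is_walk :: "'a set \<Rightarrow> ('a \<Rightarrow> 'a \<Rightarrow> bool) \<Rightarrow> 'a list \<Rightarrow> bool" where
  "is_walk V E xs \<longleftrightarrow> xs \<noteq> [] \<and> set xs \<subseteq> V \<and>
     (\<forall>i. Suc i < length xs \<longrightarrow> E (xs ! i) (xs ! Suc i))"

definition gdist :: "'a set \<Rightarrow> ('a \<Rightarrow> 'a \<Rightarrow> bool) \<Rightarrow> 'a \<Rightarrow> 'a \<Rightarrow> enat" where
  "gdist V E u v = (INF xs \<in> {xs. is_walk V E xs \<and> hd xs = u \<and> last xs = v}.
                      enat (length xs - 1))"

text \<open>Vertices: Main i j is v_{i,j}; TIn i j p / TOut i j p is the node of the tree
  T^in / T^out of v_{i,j} reached from the root by the branch choices p (root = []);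
  PathV i j j' k is the k-th internal vertex of the path for the H-edge
  {v_{i,j}, v_{i+1,j'}}.  Index vectors are lists of length l (coordinate k of the
  paper, k in [1,l], is list position k-1).\<close>

datatype vert =
    Main nat "nat list"
  | TIn nat "nat list" "bool list"
  | TOut nat "nat list" "bool list"
  | PathV nat "nat list" "nat list" nat

definition sH :: "nat \<Rightarrow> nat" where "sH b = 2 ^ b"

definition AH :: "nat \<Rightarrow> nat \<Rightarrow> nat" where "AH b l = 3 * l * (sH b)^2"

definition idx :: "nat \<Rightarrow> nat \<Rightarrow> nat list set" where
  "idx b l = {j. length j = l \<and> (\<forall>k<l. j ! k < sH b)}"

definition cH :: "nat \<Rightarrow> nat \<Rightarrow> nat" where
  "cH l i = (if i < l then i + 1 else 2 * l - i)"

definition Hedge :: "nat \<Rightarrow> nat \<Rightarrow> nat \<Rightarrow> nat list \<Rightarrow> nat list \<Rightarrow> bool" where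
  "Hedge b l i j j' \<longleftrightarrow> i < 2 * l \<and> j \<in> idx b l \<and> j' \<in> idx b l \<and>
     (\<forall>k<l. k \<noteq> cH l i - 1 \<longrightarrow> j ! k = j' ! k)"

definition wH :: "nat \<Rightarrow> nat \<Rightarrow> nat \<Rightarrow> nat list \<Rightarrow> nat list \<Rightarrow> nat" where
  "wH b l i j j' = AH b l + (nat \<bar>int (j ! (cH l i - 1)) - int (j' ! (cH l i - 1))\<bar>)^2"

definition plen :: "nat \<Rightarrow> nat \<Rightarrow> nat \<Rightarrow> nat list \<Rightarrow> nat list \<Rightarrow> nat" where
  "plen b l i j j' = wH b l i j j' - 2 * b - 2"

text \<open>Binary encoding (length b) of a number in [0, 2^b - 1]; it fixes the bijection
  between the leaves of a tree and the s neighbours they stand for.\<close>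
definition bits :: "nat \<Rightarrow> nat \<Rightarrow> bool list" where
  "bits b x = map (\<lambda>t. odd (x div 2 ^ t)) [0..<b]"

text \<open>Vertex number k (0..plen) on the path from the leaf u^out_v to the leaf v^in_u,
  where u = v_{i,j}, v = v_{i+1,j'}.\<close>
definition pnode :: "nat \<Rightarrow> nat \<Rightarrow> nat \<Rightarrow> nat list \<Rightarrow> nat list \<Rightarrow> nat \<Rightarrow> vert" where
  "pnode b l i j j' k =
     (if k = 0 then TOut i j (bits b (j' ! (cH l i - 1)))
      else if k = plen b l i j j' then TIn (Suc i) j' (bits b (j ! (cH l i - 1)))
      else PathV i j j' k)"

definition GV :: "nat \<Rightarrow> nat \<Rightarrow> vert set" where
  "GV b l =
     {Main i j | i j. i \<le> 2 * l \<and> j \<in> idx b l}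
   \<union> {TIn i j p | i j p. 0 < i \<and> i \<le> 2 * l \<and> j \<in> idx b l \<and> length p \<le> b}
   \<union> {TOut i j p | i j p. i < 2 * l \<and> j \<in> idx b l \<and> length p \<le> b}
   \<union> {PathV i j j' k | i j j' k. Hedge b l i j j' \<and> 0 < k \<and> k < plen b l i j j'}"

definition Garc :: "nat \<Rightarrow> nat \<Rightarrow> vert \<Rightarrow> vert \<Rightarrow> bool" where
  "Garc b l x y \<longleftrightarrow>
     (\<exists>i j. i \<le> 2 * l \<and> j \<in> idx b l \<and> 0 < i \<and> x = Main i j \<and> y = TIn i j [])
   \<or> (\<exists>i j. j \<in> idx b l \<and> i < 2 * l \<and> x = Main i j \<and> y = TOut i j [])
   \<or> (\<exists>i j p a. 0 < i \<and> i \<le> 2 * l \<and> j \<in> idx b l \<and> length p < b \<and>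
        x = TIn i j p \<and> y = TIn i j (p @ [a]))
   \<or> (\<exists>i j p a. i < 2 * l \<and> j \<in> idx b l \<and> length p < b \<and>
        x = TOut i j p \<and> y = TOut i j (p @ [a]))
   \<or> (\<exists>i j j' k. Hedge b l i j j' \<and> k < plen b l i j j' \<and>
        x = pnode b l i j j' k \<and> y = pnode b l i j j' (Suc k))"

definition GE :: "nat \<Rightarrow> nat \<Rightarrow> vert \<Rightarrow> vert \<Rightarrow> bool" where
  "GE b l x y \<longleftrightarrow> Garc b l x y \<or> Garc b l y x"

text \<open>The member of the family F_{b,l} obtained by deleting the level-l vertices
  v_{l,j}, j \<in> D (incident edges disappear since walks must stay in the vertex set).\<close>
definition GVdel :: "nat \<Rightarrow> nat \<Rightarrow> nat list set \<Rightarrow> vert set" where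
  "GVdel b l D = GV b l - {Main l j | j. j \<in> D}"

definition sumindex_protocol ::
  "nat \<Rightarrow> nat \<Rightarrow> (bool list \<Rightarrow> nat \<Rightarrow> bool list) \<Rightarrow> (bool list \<Rightarrow> nat \<Rightarrow> bool list)
     \<Rightarrow> (bool list \<Rightarrow> bool list \<Rightarrow> bool) \<Rightarrow> bool" where
  "sumindex_protocol n c MA MB R \<longleftrightarrow>
     (\<forall>S a b'. length S = n \<and> a < n \<and> b' < n \<longrightarrow>
        R (MA S a) (MB S b') = S ! ((a + b') mod n) \<and>
        length (MA S a) \<le> c \<and> length (MB S b') \<le> c)"

definition SumIndex :: "nat \<Rightarrow> nat" where
  "SumIndex n = (LEAST c. \<exists>MA MB R. sumindex_protocol n c MA MB R)"

end

theory Submission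
  imports Defs
begin

text \<open>Fix \<open>X, Y\<close> and their midpoint \<open>z = (X + Y)/2\<close>.  A walk from \<open>v\<^sub>0\<^sub>,\<^sub>X\<close> to \<open>v\<^sub>2\<^sub>l\<^sub>,\<^sub>Y\<close> must
  pass some surviving \<open>v\<^sub>l\<^sub>,\<^sub>j\<close>, and a potential that grows by at most one per edge (a quadratic
  form in the coordinates, shifted by \<open>X - j\<close> resp. \<open>j - Y\<close>) shows that it then has length at
  least \<open>2lA + |X - j|\<^sup>2 + |j - Y|\<^sup>2\<close>, which is attained for \<open>j = z\<close>.  By the parallelogram law
  this exceeds the value at \<open>j = z\<close> for every \<open>j \<noteq> z\<close>, so comparing the distance with that value
  tells whether \<open>v\<^sub>l\<^sub>,\<^sub>z\<close> was deleted.  Writing Alice's and Bob's indices in base \<open>s/2\<close> and doubling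
  the digits gives endpoints whose midpoint has digit value \<open>a + c\<close>; deleting \<open>v\<^sub>l\<^sub>,\<^sub>z\<close> wherever
  \<open>S\<close> vanishes at that value turns any distance labeling, plus \<open>(b - 1) l\<close> bits of index, into a
  Sum-Index protocol on \<open>\<int>\<^sub>m\<close>.\<close>

section \<open>Walks and distances\<close>

lemma is_walk_Nil [simp]: "\<not> is_walk V E []"
  by (simp add: is_walk_def)

lemma is_walk_singleton [simp]: "is_walk V E [x] \<longleftrightarrow> x \<in> V"
  by (simp add: is_walk_def)

lemma is_walk_Cons_Cons [simp]:
  "is_walk V E (x # y # zs) \<longleftrightarrow> x \<in> V \<and> E x y \<and> is_walk V E (y # zs)"
proof -
  have "(\<forall>i. Suc i < length (x # y # zs) \<longrightarrow> E ((x # y # zs) ! i) ((x # y # zs) ! Suc i))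
    \<longleftrightarrow> E x y \<and> (\<forall>i. Suc i < length (y # zs) \<longrightarrow> E ((y # zs) ! i) ((y # zs) ! Suc i))"
    by (metis Suc_less_eq length_Cons nat.exhaust nth_Cons_0 nth_Cons_Suc zero_less_Suc)
  then show ?thesis
    unfolding is_walk_def by auto
qed

lemma is_walk_append_Cons:
  "is_walk V E (ys @ w # zs) \<Longrightarrow> is_walk V E (ys @ [w]) \<and> is_walk V E (w # zs)"
proof (induction ys)
  case (Cons y ys)
  then show ?case
    by (cases ys) auto
qed (cases zs, auto)

lemma is_walk_crossing:
  assumes "is_walk V E xs" "P (hd xs)" "\<not> P (last xs)"
    and crossing: "\<And>x y. E x y \<Longrightarrow> P x \<Longrightarrow> \<not> P y \<Longrightarrow> y \<in> C"
  shows "\<exists>ys w zs. xs = ys @ w # zs \<and> w \<in> C"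
  using assms(1-3)
proof (induction xs rule: induct_list012)
  case (3 x y zs)
  show ?case
  proof (cases "P y")
    case True
    then obtain ys w zs' where "y # zs = ys @ w # zs'" "w \<in> C"
      using 3 by auto
    then show ?thesis
      by (intro exI[of _ "x # ys"]) auto
  next
    case False
    then have "y \<in> C"
      using 3 crossing by auto
    then show ?thesis
      by (intro exI[of _ "[x]"]) auto
  qed
qed simp_all

lemma is_walk_potential_bound:
  fixes \<phi> :: "'a \<Rightarrow> int"
  assumes "\<And>x y. E x y \<Longrightarrow> \<phi> y \<le> \<phi> x + 1"
  shows "is_walk V E xs \<Longrightarrow> \<phi> (last xs) - \<phi> (hd xs) \<le> int (length xs) - 1"
proof (induction xs rule: induct_list012)
  case (3 x y zs)
  then have "\<phi> (last (y # zs)) - \<phi> y \<le> int (length (y # zs)) - 1" "\<phi> y \<le> \<phi> x + 1"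
    using assms by auto
  then show ?case
    by simp
qed simp_all

inductive has_walk :: "'a set \<Rightarrow> ('a \<Rightarrow> 'a \<Rightarrow> bool) \<Rightarrow> 'a \<Rightarrow> 'a \<Rightarrow> nat \<Rightarrow> bool"
  for V E where
  has_walk_refl: "u \<in> V \<Longrightarrow> has_walk V E u u 0"
| has_walk_step: "u \<in> V \<Longrightarrow> E u w \<Longrightarrow> has_walk V E w v n \<Longrightarrow> has_walk V E u v (Suc n)"

lemma has_walk_trans:
  "has_walk V E u v n \<Longrightarrow> has_walk V E v w m \<Longrightarrow> has_walk V E u w (n + m)"
  by (induction rule: has_walk.induct) (auto intro: has_walk_step)

lemma has_walk_edge: "u \<in> V \<Longrightarrow> v \<in> V \<Longrightarrow> E u v \<Longrightarrow> has_walk V E u v 1"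
  using has_walk_step[OF _ _ has_walk_refl] by fastforce

lemma has_walk_is_walk:
  "has_walk V E u v n \<Longrightarrow> \<exists>xs. is_walk V E xs \<and> hd xs = u \<and> last xs = v \<and> length xs = Suc n"
proof (induction rule: has_walk.induct)
  case (has_walk_refl u)
  then show ?case
    by (intro exI[of _ "[u]"]) auto
next
  case (has_walk_step u w v n)
  then obtain xs where "is_walk V E xs" "hd xs = w" "last xs = v" "length xs = Suc n"
    by blast
  then show ?case
    using has_walk_step.hyps by (intro exI[of _ "u # xs"]) (cases xs, auto)
qed

lemma gdist_le_has_walk:
  assumes "has_walk V E u v n"
  shows "gdist V E u v \<le> enat n"
proof -
  obtain xs where "is_walk V E xs" "hd xs = u" "last xs = v" "length xs = Suc n"
    using has_walk_is_walk[OF assms] by blast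
  then have "gdist V E u v \<le> enat (length xs - 1)"
    unfolding gdist_def by (intro INF_lower) simp
  with \<open>length xs = Suc n\<close> show ?thesis
    by simp
qed

section \<open>A potential on \<open>G\<^sub>b\<^sub>,\<^sub>l\<close>\<close>

text \<open>Position \<open>k\<close> of the index vectors is changed by the layers \<open>i = k\<close> and
  \<open>i = 2l - 1 - k\<close> of \<open>H\<close>; \<open>phase l k i\<close> counts how many of them lie below level \<open>i\<close>.\<close>

definition phase :: "nat \<Rightarrow> nat \<Rightarrow> nat \<Rightarrow> nat" where
  "phase l k i = (if i \<le> k then 0 else if i + k < 2 * l then 1 else 2)"

lemma cH_less: "i < 2 * l \<Longrightarrow> cH l i - 1 < l"
  by (auto simp: cH_def)

lemma phase_Suc:
  "k < l \<Longrightarrow> i < 2 * l \<Longrightarrow> phase l k (Suc i) = phase l k i + (if k = cH l i - 1 then 1 else 0)"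
  unfolding phase_def cH_def by auto

text \<open>For a shift vector \<open>d\<close>, crossing an \<open>H\<close>-edge that changes position \<open>c\<close> by \<open>\<Delta>\<close> raises
  this potential by \<open>A - 2 d\<^sub>c \<Delta> - d\<^sub>c\<^sup>2 \<le> A + \<Delta>\<^sup>2\<close>, the weight of the edge, with equality
  iff \<open>\<Delta> = -d\<^sub>c\<close>.\<close>

definition level_potential :: "nat \<Rightarrow> nat \<Rightarrow> (nat \<Rightarrow> int) \<Rightarrow> nat \<Rightarrow> nat list \<Rightarrow> int" where
  "level_potential b l d i j =
     int (AH b l) * int i + (\<Sum>k<l. - 2 * d k * int (j ! k) - int (phase l k i) * (d k)\<^sup>2)"

lemma level_potential_Hedge:
  assumes "Hedge b l i j j'"
  defines "c \<equiv> cH l i - 1"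
  shows "level_potential b l d (Suc i) j' - level_potential b l d i j =
     int (AH b l) - 2 * d c * (int (j' ! c) - int (j ! c)) - (d c)\<^sup>2"
proof -
  have i: "i < 2 * l" and same: "\<And>k. k < l \<Longrightarrow> k \<noteq> c \<Longrightarrow> j ! k = j' ! k"
    using assms by (auto simp: Hedge_def)
  have "(\<Sum>k<l. - 2 * d k * int (j' ! k) - int (phase l k (Suc i)) * (d k)\<^sup>2)
      - (\<Sum>k<l. - 2 * d k * int (j ! k) - int (phase l k i) * (d k)\<^sup>2)
    = (\<Sum>k<l. if k = c then - 2 * d c * (int (j' ! c) - int (j ! c)) - (d c)\<^sup>2 else 0)"
    unfolding sum_subtractf[symmetric]
    by (intro sum.cong) (auto simp: phase_Suc[OF _ i] c_def same algebra_simps)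
  also have "\<dots> = - 2 * d c * (int (j' ! c) - int (j ! c)) - (d c)\<^sup>2"
    using cH_less[OF i] by (simp add: c_def)
  finally show ?thesis
    unfolding level_potential_def by (simp add: algebra_simps)
qed

lemma wH_int: "int (wH b l i j j') = int (AH b l) + (int (j ! (cH l i - 1)) - int (j' ! (cH l i - 1)))\<^sup>2"
  unfolding wH_def by simp

lemma three_sH_le_AH: "l \<ge> 1 \<Longrightarrow> 3 * (sH b)\<^sup>2 \<le> AH b l"
  by (simp add: AH_def)

lemma Suc_le_sH: "Suc b \<le> sH b"
  using less_exp[of b] by (simp add: sH_def Suc_le_eq)

lemma wH_ge:
  assumes "l \<ge> 1"
  shows "2 * b + 3 \<le> wH b l i j j'"
proof -
  have "3 * (sH b * sH b) \<le> wH b l i j j'"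
    using three_sH_le_AH[OF assms, of b] by (simp add: wH_def power2_eq_square)
  then show ?thesis
    using Suc_le_sH[of b] le_square[of "sH b"] by linarith
qed

lemma level_potential_Hedge_bounds:
  assumes "Hedge b l i j j'" "l \<ge> 1" and d: "\<forall>k<l. \<bar>d k\<bar> \<le> int (sH b)"
  defines "\<delta> \<equiv> level_potential b l d (Suc i) j' - level_potential b l d i j"
  shows "\<delta> \<le> int (wH b l i j j')" and "4 * int b + 4 - int (wH b l i j j') \<le> \<delta>"
proof -
  define c where "c = cH l i - 1"
  define \<Delta> where "\<Delta> = int (j' ! c) - int (j ! c)"
  define s where "s = int (sH b)"
  have \<delta>: "\<delta> = int (AH b l) - 2 * d c * \<Delta> - (d c)\<^sup>2"
    using level_potential_Hedge[OF assms(1)] by (simp add: \<delta>_def \<Delta>_def c_def)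
  have w: "int (wH b l i j j') = int (AH b l) + \<Delta>\<^sup>2"
    unfolding wH_int by (simp add: \<Delta>_def c_def power2_commute)
  show "\<delta> \<le> int (wH b l i j j')"
    using zero_le_power2[of "\<Delta> + d c"] unfolding \<delta> w by (simp add: power2_eq_square algebra_simps)
  have "c < l"
    using assms(1) cH_less by (simp add: Hedge_def c_def)
  then have "\<bar>d c\<bar> \<le> \<bar>s\<bar>"
    using d by (simp add: s_def)
  then have "(d c)\<^sup>2 \<le> s\<^sup>2"
    by (simp add: abs_le_square_iff)
  moreover have "3 * s\<^sup>2 \<le> int (AH b l)"
    using three_sH_le_AH[OF assms(2), of b] unfolding s_def
    by (metis of_nat_le_iff of_nat_mult of_nat_numeral of_nat_power)
  moreover have "int b + 1 \<le> s"
    using Suc_le_sH[of b] unfolding s_def by linarith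
  moreover have "s \<le> s * s"
    using \<open>int b + 1 \<le> s\<close> mult_left_mono[of 1 s s] by simp
  moreover have "0 \<le> (\<Delta> - d c)\<^sup>2"
    by simp
  ultimately have "d c * d c \<le> s * s" "3 * (s * s) \<le> int (AH b l)" "int b + 1 \<le> s" "s \<le> s * s"
    "0 \<le> \<Delta> * \<Delta> - 2 * d c * \<Delta> + d c * d c"
    by (simp_all add: power2_eq_square algebra_simps)
  then show "4 * int b + 4 - int (wH b l i j j') \<le> \<delta>"
    unfolding \<delta> w power2_eq_square by linarith
qed

text \<open>The lower bound in \<open>level_potential_Hedge_bounds\<close> is what makes the two expressions
  for a path vertex agree with the tree potentials at the leaves, so that the potential changes by
  at most one along every edge of \<open>G\<^sub>b\<^sub>,\<^sub>l\<close>.\<close>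

fun potential :: "nat \<Rightarrow> nat \<Rightarrow> (nat \<Rightarrow> int) \<Rightarrow> vert \<Rightarrow> int" where
  "potential b l d (Main i j) = level_potential b l d i j"
| "potential b l d (TIn i j p) = level_potential b l d i j - 1 - int (length p)"
| "potential b l d (TOut i j p) = level_potential b l d i j + 1 + int (length p)"
| "potential b l d (PathV i j j' k) = min (level_potential b l d i j + 1 + int b + int k)
     (level_potential b l d (Suc i) j' - 1 - int b + int (plen b l i j j') - int k)"

lemma length_bits [simp]: "length (bits b x) = b"
  by (simp add: bits_def)

lemma potential_pnode:
  assumes "Hedge b l i j j'" "l \<ge> 1" "\<forall>k<l. \<bar>d k\<bar> \<le> int (sH b)" "k \<le> plen b l i j j'"
  shows "potential b l d (pnode b l i j j' k) = min (level_potential b l d i j + 1 + int b + int k)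
     (level_potential b l d (Suc i) j' - 1 - int b + int (plen b l i j j') - int k)"
proof -
  have "2 * b + 3 \<le> wH b l i j j'"
    using wH_ge assms(2) by blast
  then have "int (plen b l i j j') = int (wH b l i j j') - 2 * int b - 2" "plen b l i j j' \<noteq> 0"
    by (simp_all add: plen_def of_nat_diff)
  then show ?thesis
    using level_potential_Hedge_bounds[OF assms(1-3)]
    by (auto simp: pnode_def min_def)
qed

lemma potential_Garc:
  assumes "l \<ge> 1" "\<forall>k<l. \<bar>d k\<bar> \<le> int (sH b)" "Garc b l x y"
  shows "\<bar>potential b l d x - potential b l d y\<bar> \<le> 1"
  using assms(3) unfolding Garc_def
proof (elim disjE exE conjE)
  fix i j j' k
  assume "Hedge b l i j j'" "k < plen b l i j j'"
    and "x = pnode b l i j j' k" "y = pnode b l i j j' (Suc k)"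
  then show ?thesis
    using potential_pnode[OF _ assms(1,2)] by (simp add: min_def)
qed auto

lemma potential_walk:
  assumes "l \<ge> 1" "\<forall>k<l. \<bar>d k\<bar> \<le> int (sH b)" "is_walk V (GE b l) xs"
  shows "potential b l d (last xs) - potential b l d (hd xs) \<le> int (length xs) - 1"
  using assms(3)
proof (rule is_walk_potential_bound[rotated])
  fix x y
  assume "GE b l x y"
  then show "potential b l d y \<le> potential b l d x + 1"
    unfolding GE_def using potential_Garc[OF assms(1,2), of x y] potential_Garc[OF assms(1,2), of y x]
    by auto
qed

section \<open>Lower bound on the distance between the two outer levels\<close>

fun below_level :: "nat \<Rightarrow> vert \<Rightarrow> bool" where
  "below_level l (Main i j) = (i < l)"
| "below_level l (TIn i j p) = (i \<le> l)"
| "below_level l (TOut i j p) = (i < l)"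
| "below_level l (PathV i j j' k) = (i < l)"

lemma below_level_pnode: "below_level l (pnode b l' i j j' k) = (i < l)"
  by (auto simp: pnode_def)

lemma GE_leaving_below_level:
  "GE b l x y \<Longrightarrow> below_level l x \<Longrightarrow> \<not> below_level l y \<Longrightarrow> y \<in> range (Main l)"
  unfolding GE_def Garc_def by (auto simp: below_level_pnode)

definition sqdiff :: "nat \<Rightarrow> nat \<Rightarrow> nat" where
  "sqdiff a c = (nat \<bar>int a - int c\<bar>)\<^sup>2"

definition sqdist :: "nat \<Rightarrow> nat list \<Rightarrow> nat list \<Rightarrow> nat" where
  "sqdist l x y = (\<Sum>k<l. sqdiff (x ! k) (y ! k))"

lemma int_sqdist: "int (sqdist l x y) = (\<Sum>k<l. (int (x ! k) - int (y ! k))\<^sup>2)"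
  by (simp add: sqdist_def sqdiff_def)

text \<open>The length of the shortest route from \<open>v\<^sub>0\<^sub>,\<^sub>X\<close> to \<open>v\<^sub>2\<^sub>l\<^sub>,\<^sub>Y\<close> through \<open>v\<^sub>l\<^sub>,\<^sub>z\<close>.\<close>

definition dist_via :: "nat \<Rightarrow> nat \<Rightarrow> nat list \<Rightarrow> nat list \<Rightarrow> nat list \<Rightarrow> nat" where
  "dist_via b l X z Y = 2 * l * AH b l + sqdist l X z + sqdist l z Y"

lemma idx_nth_less: "j \<in> idx b l \<Longrightarrow> k < l \<Longrightarrow> j ! k < sH b"
  by (simp add: idx_def)

lemma idx_diff_bound:
  "x \<in> idx b l \<Longrightarrow> y \<in> idx b l \<Longrightarrow> \<forall>k<l. \<bar>int (x ! k) - int (y ! k)\<bar> \<le> int (sH b)"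
  by (auto dest!: idx_nth_less)

lemma level_potential_first_half:
  "level_potential b l d l j - level_potential b l d 0 X = int (l * AH b l) + int (sqdist l X j)"
  if "d = (\<lambda>k. int (X ! k) - int (j ! k))"
proof -
  have "level_potential b l d l j - level_potential b l d 0 X = int (l * AH b l) +
     (\<Sum>k<l. (- 2 * d k * int (j ! k) - int (phase l k l) * (d k)\<^sup>2)
             - (- 2 * d k * int (X ! k) - int (phase l k 0) * (d k)\<^sup>2))"
    unfolding level_potential_def sum_subtractf by simp
  also have "\<dots> = int (l * AH b l) + int (sqdist l X j)"
    unfolding int_sqdist that by (intro arg_cong2[where f = "(+)"] sum.cong)
      (auto simp: phase_def power2_eq_square algebra_simps)
  finally show ?thesis .
qed

lemma level_potential_second_half:
  "level_potential b l d (2 * l) Y - level_potential b l d l j = int (l * AH b l) + int (sqdist l j Y)"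
  if "d = (\<lambda>k. int (j ! k) - int (Y ! k))"
proof -
  have "level_potential b l d (2 * l) Y - level_potential b l d l j = int (l * AH b l) +
     (\<Sum>k<l. (- 2 * d k * int (Y ! k) - int (phase l k (2 * l)) * (d k)\<^sup>2)
             - (- 2 * d k * int (j ! k) - int (phase l k l) * (d k)\<^sup>2))"
    unfolding level_potential_def sum_subtractf by (simp add: algebra_simps)
  also have "\<dots> = int (l * AH b l) + int (sqdist l j Y)"
    unfolding int_sqdist that by (intro arg_cong2[where f = "(+)"] sum.cong)
      (auto simp: phase_def power2_eq_square algebra_simps)
  finally show ?thesis .
qed

lemma walk_length_first_half:
  assumes "l \<ge> 1" "X \<in> idx b l" "j \<in> idx b l" "is_walk V (GE b l) xs"
    and "hd xs = Main 0 X" "last xs = Main l j"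
  shows "l * AH b l + sqdist l X j < length xs"
proof -
  have "int (l * AH b l + sqdist l X j) < int (length xs)"
    using potential_walk[OF assms(1) idx_diff_bound[OF assms(2,3)] assms(4)] assms(5,6)
      level_potential_first_half[where X = X and j = j, OF refl]
    by simp
  then show ?thesis
    by (simp only: of_nat_less_iff)
qed

lemma walk_length_second_half:
  assumes "l \<ge> 1" "j \<in> idx b l" "Y \<in> idx b l" "is_walk V (GE b l) xs"
    and "hd xs = Main l j" "last xs = Main (2 * l) Y"
  shows "l * AH b l + sqdist l j Y < length xs"
proof -
  have "int (l * AH b l + sqdist l j Y) < int (length xs)"
    using potential_walk[OF assms(1) idx_diff_bound[OF assms(2,3)] assms(4)] assms(5,6)
      level_potential_second_half[where Y = Y and j = j, OF refl]
    by simp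
  then show ?thesis
    by (simp only: of_nat_less_iff)
qed

lemma sqdist_midpoint_less:
  assumes mid: "\<forall>k<l. X ! k + Y ! k = 2 * z ! k"
    and "length j = l" "length z = l" "j \<noteq> z"
  shows "sqdist l X z + sqdist l z Y < sqdist l X j + sqdist l j Y"
proof -
  let ?sq = "\<lambda>x y k. (int (x ! k) - int (y ! k))\<^sup>2"
  have parallelogram: "?sq X z k + ?sq z Y k + 2 * ?sq j z k = ?sq X j k + ?sq j Y k" if "k < l" for k
  proof -
    have "int (X ! k) + int (Y ! k) = 2 * int (z ! k)"
      using mid that by (metis of_nat_add of_nat_mult of_nat_numeral)
    then show ?thesis
      unfolding power2_eq_square by algebra
  qed
  obtain k0 where "k0 < l" "j ! k0 \<noteq> z ! k0"
    using assms(2-4) nth_equalityI by metis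
  then have "(\<Sum>k<l. ?sq X z k + ?sq z Y k) < (\<Sum>k<l. ?sq X j k + ?sq j Y k)"
    using parallelogram
    by (intro sum_strict_mono_ex1) (auto intro!: bexI[of _ k0] simp flip: parallelogram)
  then show ?thesis
    unfolding of_nat_less_iff[symmetric, where 'a = int] of_nat_add int_sqdist sum.distrib .
qed

lemma dist_via_less_gdist:
  assumes "l \<ge> 1" "X \<in> idx b l" "Y \<in> idx b l" "z \<in> idx b l"
    and "\<forall>k<l. X ! k + Y ! k = 2 * z ! k" "z \<in> D"
  shows "enat (dist_via b l X z Y) < gdist (GVdel b l D) (GE b l) (Main 0 X) (Main (2 * l) Y)"
  unfolding gdist_def Suc_ile_eq[symmetric]
proof (rule INF_greatest)
  fix xs
  assume "xs \<in> {xs. is_walk (GVdel b l D) (GE b l) xs \<and> hd xs = Main 0 X \<and> last xs = Main (2 * l) Y}"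
  then have walk: "is_walk (GVdel b l D) (GE b l) xs" and ends: "hd xs = Main 0 X" "last xs = Main (2 * l) Y"
    by auto
  obtain ys j zs where xs: "xs = ys @ Main l j # zs"
    using is_walk_crossing[OF walk, of "below_level l" "range (Main l)"] GE_leaving_below_level ends assms(1)
    by auto
  then have "Main l j \<in> GVdel b l D"
    using walk by (auto simp: is_walk_def)
  then have j: "j \<in> idx b l" "j \<noteq> z"
    using \<open>z \<in> D\<close> by (auto simp: GVdel_def GV_def)
  have "l * AH b l + sqdist l X j < length (ys @ [Main l j])"
    using is_walk_append_Cons[of _ _ ys] walk ends xs
    by (intro walk_length_first_half[OF assms(1,2) j(1)]) (auto simp: hd_append)
  moreover have "l * AH b l + sqdist l j Y < length (Main l j # zs)"
    using is_walk_append_Cons[of _ _ ys] walk ends xs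
    by (intro walk_length_second_half[OF assms(1) j(1) assms(3)]) auto
  moreover have "sqdist l X z + sqdist l z Y < sqdist l X j + sqdist l j Y"
    using assms(4,5) j by (intro sqdist_midpoint_less) (auto simp: idx_def)
  ultimately show "enat (Suc (dist_via b l X z Y)) \<le> enat (length xs - 1)"
    unfolding dist_via_def xs by simp
qed

section \<open>Upper bound via an undeleted midpoint\<close>

lemma Main_mem_GVdel: "i \<le> 2 * l \<Longrightarrow> j \<in> idx b l \<Longrightarrow> (i = l \<Longrightarrow> j \<notin> D) \<Longrightarrow> Main i j \<in> GVdel b l D"
  by (auto simp: GVdel_def GV_def)

lemma has_walk_TOut_descend:
  assumes "i < 2 * l" "j \<in> idx b l" "length q \<le> b"
  shows "has_walk (GVdel b l D) (GE b l) (TOut i j []) (TOut i j q) (length q)"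
  using assms(3)
proof (induction q rule: rev_induct)
  case Nil
  then show ?case
    using assms by (auto intro: has_walk_refl simp: GVdel_def GV_def)
next
  case (snoc a q)
  have "has_walk (GVdel b l D) (GE b l) (TOut i j q) (TOut i j (q @ [a])) 1"
    using assms snoc.prems by (intro has_walk_edge) (auto simp: GVdel_def GV_def GE_def Garc_def)
  then show ?case
    using has_walk_trans snoc by fastforce
qed

lemma has_walk_TIn_ascend:
  assumes "0 < i" "i \<le> 2 * l" "j \<in> idx b l" "length q \<le> b"
  shows "has_walk (GVdel b l D) (GE b l) (TIn i j q) (TIn i j []) (length q)"
  using assms(4)
proof (induction q rule: rev_induct)
  case Nil
  then show ?case
    using assms by (auto intro: has_walk_refl simp: GVdel_def GV_def)
next
  case (snoc a q)
  have "has_walk (GVdel b l D) (GE b l) (TIn i j (q @ [a])) (TIn i j q) 1"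
    using assms snoc.prems by (intro has_walk_edge) (auto simp: GVdel_def GV_def GE_def Garc_def)
  then show ?case
    using has_walk_trans snoc by fastforce
qed

lemma has_walk_pnode:
  assumes "Hedge b l i j j'" "k \<le> plen b l i j j'"
  shows "has_walk (GVdel b l D) (GE b l) (pnode b l i j j' 0) (pnode b l i j j' k) k"
  using assms(2)
proof (induction k)
  case 0
  then show ?case
    using assms(1) by (auto intro: has_walk_refl simp: pnode_def GVdel_def GV_def Hedge_def)
next
  case (Suc k)
  have "pnode b l i j j' n \<in> GVdel b l D" if "n \<le> plen b l i j j'" for n
    using assms(1) that by (auto simp: pnode_def GVdel_def GV_def Hedge_def)
  moreover have "Garc b l (pnode b l i j j' k) (pnode b l i j j' (Suc k))"
    using assms(1) Suc_le_lessD[OF Suc.prems] unfolding Garc_def by (intro disjI2) blast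
  ultimately have "has_walk (GVdel b l D) (GE b l) (pnode b l i j j' k) (pnode b l i j j' (Suc k)) 1"
    using Suc.prems by (intro has_walk_edge) (auto simp: GE_def)
  then show ?case
    using has_walk_trans Suc by fastforce
qed

lemma has_walk_Hedge:
  assumes "l \<ge> 1" "Hedge b l i j j'"
    and "Main i j \<in> GVdel b l D" "Main (Suc i) j' \<in> GVdel b l D"
  shows "has_walk (GVdel b l D) (GE b l) (Main i j) (Main (Suc i) j') (wH b l i j j')"
proof -
  let ?V = "GVdel b l D" and ?c = "cH l i - 1" and ?P = "plen b l i j j'"
  have i: "i < 2 * l" and j: "j \<in> idx b l" "j' \<in> idx b l"
    using assms(2) by (auto simp: Hedge_def)
  have "2 * b + 3 \<le> wH b l i j j'"
    using wH_ge assms(1) by blast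
  then have P: "?P \<noteq> 0" "wH b l i j j' = 1 + b + ?P + b + 1"
    by (simp_all add: plen_def)
  have "has_walk ?V (GE b l) (Main i j) (TOut i j []) 1"
    using assms(3) i j by (intro has_walk_edge) (auto simp: GVdel_def GV_def GE_def Garc_def)
  moreover have "has_walk ?V (GE b l) (TOut i j []) (TOut i j (bits b (j' ! ?c))) b"
    using has_walk_TOut_descend[OF i j(1), of "bits b (j' ! ?c)"] by simp
  moreover have "has_walk ?V (GE b l) (TOut i j (bits b (j' ! ?c))) (TIn (Suc i) j' (bits b (j ! ?c))) ?P"
    using has_walk_pnode[OF assms(2) le_refl] P by (simp add: pnode_def)
  moreover have "has_walk ?V (GE b l) (TIn (Suc i) j' (bits b (j ! ?c))) (TIn (Suc i) j' []) b"
    using has_walk_TIn_ascend[of "Suc i" l j' b "bits b (j ! ?c)"] i j by simp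
  moreover have "has_walk ?V (GE b l) (TIn (Suc i) j' []) (Main (Suc i) j') 1"
    using assms(4) i j by (intro has_walk_edge) (auto simp: GVdel_def GV_def GE_def Garc_def)
  ultimately show ?thesis
    unfolding P(2) by (meson has_walk_trans)
qed

definition route :: "nat \<Rightarrow> nat list \<Rightarrow> nat list \<Rightarrow> nat list \<Rightarrow> nat \<Rightarrow> nat list" where
  "route l X z Y i = map (\<lambda>k. [X ! k, z ! k, Y ! k] ! phase l k i) [0..<l]"

lemma route_nth: "k < l \<Longrightarrow> route l X z Y i ! k = [X ! k, z ! k, Y ! k] ! phase l k i"
  by (simp add: route_def)

lemma length_route [simp]: "length (route l X z Y i) = l"
  by (simp add: route_def)

lemma route_idx: "X \<in> idx b l \<Longrightarrow> z \<in> idx b l \<Longrightarrow> Y \<in> idx b l \<Longrightarrow> route l X z Y i \<in> idx b l"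
  unfolding idx_def by (auto simp: route_def phase_def)

lemma route_0: "length X = l \<Longrightarrow> route l X z Y 0 = X"
  and route_l: "length z = l \<Longrightarrow> route l X z Y l = z"
  and route_2l: "length Y = l \<Longrightarrow> route l X z Y (2 * l) = Y"
  by (auto intro!: nth_equalityI simp: route_nth phase_def)

lemma Hedge_route:
  "X \<in> idx b l \<Longrightarrow> z \<in> idx b l \<Longrightarrow> Y \<in> idx b l \<Longrightarrow> i < 2 * l \<Longrightarrow>
    Hedge b l i (route l X z Y i) (route l X z Y (Suc i))"
  unfolding Hedge_def by (auto simp: route_idx route_nth phase_Suc)

lemma wH_route_up:
  "i < l \<Longrightarrow> wH b l i (route l X z Y i) (route l X z Y (Suc i)) = AH b l + sqdiff (X ! i) (z ! i)"
  by (simp add: wH_def sqdiff_def route_nth cH_def phase_def)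

lemma wH_route_down:
  "n < l \<Longrightarrow> i = 2 * l - Suc n \<Longrightarrow>
    wH b l i (route l X z Y i) (route l X z Y (Suc i)) = AH b l + sqdiff (z ! n) (Y ! n)"
  by (simp add: wH_def sqdiff_def route_nth cH_def phase_def)

lemma has_walk_route_step:
  assumes "l \<ge> 1" "X \<in> idx b l" "z \<in> idx b l" "Y \<in> idx b l" "z \<notin> D" "i < 2 * l"
  shows "has_walk (GVdel b l D) (GE b l) (Main i (route l X z Y i)) (Main (Suc i) (route l X z Y (Suc i)))
     (wH b l i (route l X z Y i) (route l X z Y (Suc i)))"
proof -
  have "Main i' (route l X z Y i') \<in> GVdel b l D" if "i' \<le> 2 * l" for i'
    using that assms route_l[of z l X Y] route_idx[OF assms(2-4)] by (intro Main_mem_GVdel) (auto simp: idx_def)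
  then show ?thesis
    using assms by (intro has_walk_Hedge Hedge_route) auto
qed

lemma has_walk_route_up:
  assumes "l \<ge> 1" "X \<in> idx b l" "z \<in> idx b l" "Y \<in> idx b l" "z \<notin> D" "n \<le> l"
  shows "has_walk (GVdel b l D) (GE b l) (Main 0 X) (Main n (route l X z Y n))
     (n * AH b l + (\<Sum>k<n. sqdiff (X ! k) (z ! k)))"
  using assms(6)
proof (induction n)
  case 0
  then show ?case
    using assms(1,2) route_0[of X l z Y] by (auto intro!: has_walk_refl Main_mem_GVdel simp: idx_def)
next
  case (Suc n)
  then show ?case
    using has_walk_trans[OF Suc.IH has_walk_route_step[OF assms(1-5), of n]] wH_route_up[of n l b X z Y]
    by (simp add: algebra_simps)
qed

lemma has_walk_route_down:
  assumes "l \<ge> 1" "X \<in> idx b l" "z \<in> idx b l" "Y \<in> idx b l" "z \<notin> D" "n \<le> l"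
  shows "has_walk (GVdel b l D) (GE b l) (Main (2 * l - n) (route l X z Y (2 * l - n))) (Main (2 * l) Y)
     (n * AH b l + (\<Sum>k<n. sqdiff (z ! k) (Y ! k)))"
  using assms(6)
proof (induction n)
  case 0
  then show ?case
    using assms(1,4) route_2l[of Y l X z] by (auto intro!: has_walk_refl Main_mem_GVdel simp: idx_def)
next
  case (Suc n)
  define i where "i = 2 * l - Suc n"
  have i: "Suc i = 2 * l - n" "i < 2 * l"
    using Suc.prems by (simp_all add: i_def)
  then have "has_walk (GVdel b l D) (GE b l) (Main i (route l X z Y i))
      (Main (2 * l - n) (route l X z Y (2 * l - n))) (AH b l + sqdiff (z ! n) (Y ! n))"
    using has_walk_route_step[OF assms(1-5) i(2)] wH_route_down[OF _ i_def, of b X z Y] Suc.prems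
    by simp
  from has_walk_trans[OF this Suc.IH[OF Suc_leD[OF Suc.prems]]] show ?case
    by (simp add: i_def algebra_simps)
qed

lemma gdist_le_dist_via:
  assumes "l \<ge> 1" "X \<in> idx b l" "z \<in> idx b l" "Y \<in> idx b l" "z \<notin> D"
  shows "gdist (GVdel b l D) (GE b l) (Main 0 X) (Main (2 * l) Y) \<le> enat (dist_via b l X z Y)"
proof -
  have "has_walk (GVdel b l D) (GE b l) (Main l (route l X z Y l)) (Main (2 * l) Y)
      (l * AH b l + sqdist l z Y)"
    using has_walk_route_down[OF assms le_refl] by (simp add: sqdist_def)
  then have "has_walk (GVdel b l D) (GE b l) (Main 0 X) (Main (2 * l) Y)
      ((l * AH b l + sqdist l X z) + (l * AH b l + sqdist l z Y))"
    using has_walk_trans has_walk_route_up[OF assms le_refl] by (fastforce simp: sqdist_def)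
  moreover have "(l * AH b l + sqdist l X z) + (l * AH b l + sqdist l z Y) = dist_via b l X z Y"
    by (simp add: dist_via_def)
  ultimately show ?thesis
    using gdist_le_has_walk by metis
qed

section \<open>Encoding Sum-Index into the deletion pattern\<close>

lemma sum_base_digits: "(\<Sum>k<n. (a div h ^ k mod h) * h ^ k) = (a :: nat) mod h ^ n"
proof (induction n)
  case (Suc n)
  have "a mod h ^ Suc n = h ^ n * (a div h ^ n mod h) + a mod h ^ n"
    unfolding power_Suc2 by (rule mod_mult2_eq)
  with Suc show ?case
    by (simp add: algebra_simps)
qed simp

lemma inj_on_bits: "inj_on (bits e) {..<2 ^ e}"
proof (rule inj_onI)
  fix a a' :: nat
  assume "a \<in> {..<2 ^ e}" "a' \<in> {..<2 ^ e}" and eq: "bits e a = bits e a'"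
  then have "a = take_bit e a" "a' = take_bit e a'"
    by (simp_all add: take_bit_nat_eq_self)
  moreover have "bit a t = bit a' t" if "t < e" for t
    using arg_cong[OF eq, of "\<lambda>bs. bs ! t"] that by (simp add: bits_def bit_nat_def)
  ultimately show "a = a'"
    by (metis bit_eqI bit_take_bit_iff)
qed

text \<open>Doubling the digits of
  Alice's index \<open>a\<close> and of Bob's index \<open>c\<close> gives two vertices of levels \<open>0\<close> and \<open>2l\<close> whose
  midpoint has digit value \<open>a + c\<close>.\<close>

definition digit :: "nat \<Rightarrow> nat \<Rightarrow> nat \<Rightarrow> nat" where
  "digit b a k = a div (2 ^ (b - 1)) ^ k mod 2 ^ (b - 1)"

definition endpoint :: "nat \<Rightarrow> nat \<Rightarrow> nat \<Rightarrow> nat list" where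
  "endpoint b l a = map (\<lambda>k. 2 * digit b a k) [0..<l]"

definition midpoint :: "nat \<Rightarrow> nat \<Rightarrow> nat \<Rightarrow> nat \<Rightarrow> nat list" where
  "midpoint b l a c = map (\<lambda>k. digit b a k + digit b c k) [0..<l]"

definition digits_value :: "nat \<Rightarrow> nat \<Rightarrow> nat list \<Rightarrow> nat" where
  "digits_value b l z = (\<Sum>k<l. z ! k * (2 ^ (b - 1)) ^ k)"

definition deleted_set :: "nat \<Rightarrow> nat \<Rightarrow> bool list \<Rightarrow> nat list set" where
  "deleted_set b l S = {z \<in> idx b l. \<not> S ! (digits_value b l z mod 2 ^ ((b - 1) * l))}"

lemma digit_less: "digit b a k < 2 ^ (b - 1)"
  by (simp add: digit_def)

lemma sH_eq: "b \<ge> 1 \<Longrightarrow> sH b = 2 * 2 ^ (b - 1)"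
  by (cases b) (simp_all add: sH_def)

lemma endpoint_idx: "b \<ge> 1 \<Longrightarrow> endpoint b l a \<in> idx b l"
  using digit_less[of b a] by (simp add: idx_def endpoint_def sH_eq)

lemma midpoint_idx: "b \<ge> 1 \<Longrightarrow> midpoint b l a c \<in> idx b l"
  using add_strict_mono[OF digit_less[of b a] digit_less[of b c]] by (simp add: idx_def midpoint_def sH_eq mult_2)

lemma endpoint_midpoint: "\<forall>k<l. endpoint b l a ! k + endpoint b l c ! k = 2 * midpoint b l a c ! k"
  by (simp add: endpoint_def midpoint_def)

lemma digits_value_midpoint:
  assumes "a < 2 ^ ((b - 1) * l)" "c < 2 ^ ((b - 1) * l)"
  shows "digits_value b l (midpoint b l a c) mod 2 ^ ((b - 1) * l) = (a + c) mod 2 ^ ((b - 1) * l)"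
proof -
  have m: "(2::nat) ^ ((b - 1) * l) = (2 ^ (b - 1)) ^ l"
    by (simp add: power_mult)
  have "digits_value b l (midpoint b l a c) = a mod (2 ^ (b - 1)) ^ l + c mod (2 ^ (b - 1)) ^ l"
    unfolding digits_value_def midpoint_def digit_def sum_base_digits[symmetric]
    by (simp add: sum.distrib algebra_simps)
  with assms show ?thesis
    unfolding m by simp
qed

lemma gdist_endpoints_le_iff:
  assumes "b \<ge> 1" "l \<ge> 1"
  shows "gdist (GVdel b l D) (GE b l) (Main 0 (endpoint b l a)) (Main (2 * l) (endpoint b l c))
      \<le> enat (dist_via b l (endpoint b l a) (midpoint b l a c) (endpoint b l c))
    \<longleftrightarrow> midpoint b l a c \<notin> D"
  using gdist_le_dist_via[OF assms(2) endpoint_idx midpoint_idx endpoint_idx]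
    dist_via_less_gdist[OF assms(2) endpoint_idx endpoint_idx midpoint_idx endpoint_midpoint]
  by (metis assms(1) leD)

lemma SumIndex_le: "sumindex_protocol n c MA MB R \<Longrightarrow> SumIndex n \<le> c"
  unfolding SumIndex_def by (intro Least_le) blast

text \<open>Each player sends the label of its endpoint followed by its index in \<open>(b - 1) l\<close> bits; the
  referee decodes the distance and compares it with the length of the route through the midpoint.\<close>

lemma SumIndex_le_label_length:
  fixes f :: "bool list \<Rightarrow> bool list \<Rightarrow> enat"
    and lab :: "nat list set \<Rightarrow> vert \<Rightarrow> bool list"
  assumes "b \<ge> 1" "l \<ge> 1"
    and scheme: "\<forall>D. D \<subseteq> idx b l \<longrightarrow>
                   (\<forall>u\<in>GVdel b l D. \<forall>v\<in>GVdel b l D.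
                      f (lab D u) (lab D v) = gdist (GVdel b l D) (GE b l) u v)"
    and short: "\<forall>D. D \<subseteq> idx b l \<longrightarrow> (\<forall>u\<in>GVdel b l D. length (lab D u) \<le> c)"
  shows "SumIndex (2 ^ ((b - 1) * l)) \<le> c + (b - 1) * l"
proof -
  define e where "e = (b - 1) * l"
  define label_part where "label_part ms = take (length ms - e) ms" for ms :: "bool list"
  define index_part where "index_part ms = inv_into {..<2 ^ e} (bits e) (drop (length ms - e) ms)"
    for ms :: "bool list"
  have parts: "label_part (ms @ bits e a) = ms" "index_part (ms @ bits e a) = a" if "a < 2 ^ e" for ms a
    using inv_into_f_f[OF inj_on_bits, of a e] that by (simp_all add: label_part_def index_part_def)
  define MA where "MA S a = lab (deleted_set b l S) (Main 0 (endpoint b l a)) @ bits e a" for S a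
  define MB where "MB S a = lab (deleted_set b l S) (Main (2 * l) (endpoint b l a)) @ bits e a" for S a
  define R where "R ma mb = (f (label_part ma) (label_part mb) \<le> enat (dist_via b l
      (endpoint b l (index_part ma)) (midpoint b l (index_part ma) (index_part mb)) (endpoint b l (index_part mb))))"
    for ma mb
  have D: "deleted_set b l S \<subseteq> idx b l" for S
    by (auto simp: deleted_set_def)
  have ends: "Main 0 (endpoint b l a) \<in> GVdel b l D" "Main (2 * l) (endpoint b l a) \<in> GVdel b l D" for a D
    using endpoint_idx[OF assms(1)] assms(2) by (auto intro: Main_mem_GVdel)
  have "sumindex_protocol (2 ^ e) (c + e) MA MB R"
    unfolding sumindex_protocol_def
  proof (intro allI impI conjI)
    fix S :: "bool list" and a a' :: nat
    assume in_range: "length S = 2 ^ e \<and> a < 2 ^ e \<and> a' < 2 ^ e"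
    have "R (MA S a) (MB S a') \<longleftrightarrow> midpoint b l a a' \<notin> deleted_set b l S"
      unfolding R_def MA_def MB_def using in_range parts scheme D ends
      by (simp add: gdist_endpoints_le_iff[OF assms(1,2)])
    also have "\<dots> \<longleftrightarrow> S ! ((a + a') mod 2 ^ e)"
      using digits_value_midpoint[of a b l a'] midpoint_idx[OF assms(1)] in_range
      by (simp add: deleted_set_def e_def)
    finally show "R (MA S a) (MB S a') = S ! ((a + a') mod 2 ^ e)" .
    show "length (MA S a) \<le> c + e" "length (MB S a') \<le> c + e"
      using short D ends by (simp_all add: MA_def MB_def)
  qed
  then show ?thesis
    unfolding e_def by (rule SumIndex_le)
qed

theorem mainTheorem8:
  fixes b l :: nat
    and f :: "bool list \<Rightarrow> bool list \<Rightarrow> enat"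
    and lab :: "nat list set \<Rightarrow> vert \<Rightarrow> bool list"
  assumes "b \<ge> 1" and "l \<ge> 1"
    and scheme: "\<forall>D. D \<subseteq> idx b l \<longrightarrow>
                   (\<forall>u\<in>GVdel b l D. \<forall>v\<in>GVdel b l D.
                      f (lab D u) (lab D v) = gdist (GVdel b l D) (GE b l) u v)"
  shows "\<exists>D. D \<subseteq> idx b l \<and> (\<exists>u\<in>GVdel b l D.
           int (length (lab D u)) \<ge> int (SumIndex (2 ^ ((b - 1) * l))) - int (b * l))"
proof (rule ccontr)
  define SI where "SI = SumIndex (2 ^ ((b - 1) * l))"
  assume neg: "\<not> ?thesis"
  have short: "length (lab D u) + b * l < SI" if "D \<subseteq> idx b l" "u \<in> GVdel b l D" for D u
  proof -
    have "\<not> int SI - int (b * l) \<le> int (length (lab D u))"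
      using neg that unfolding SI_def by blast
    then show ?thesis
      by linarith
  qed
  have "Main 0 (endpoint b l 0) \<in> GVdel b l {}"
    using endpoint_idx[OF assms(1)] by (auto intro: Main_mem_GVdel)
  then have "b * l < SI"
    using short[of "{}"] by fastforce
  moreover have "length (lab D u) \<le> SI - b * l - 1" if "D \<subseteq> idx b l" "u \<in> GVdel b l D" for D u
    using short[OF that] by linarith
  then have "SI \<le> (SI - b * l - 1) + (b - 1) * l"
    using SumIndex_le_label_length[OF assms, of "SI - b * l - 1"] unfolding SI_def by blast
  moreover have "(b - 1) * l \<le> b * l"
    by simp
  ultimately show False
    by linarith
qed

end
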